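(* Let $q\ge 2$ and $n\ge 1$ be integers, and let $[q]=\{0,1,\dots,q-1\}$. For every nonempty set $S\subseteq [q]^n$ one has $$|\Delta(S)|\ \ge\ \frac{\log |S|}{2\log(2nq)}.$$
   Context: For $x=(x_1,\dots,x_n),y=(y_1,\dots,y_n)\in[q]^n$, the Hamming distance is $d_H(x,y)=\#\{i: x_i\neq y_i\}$. For a set $S$, $\Delta(S)=\{d_H(x,y): x,y\in S\}$ is the set of Hamming distances determined by $S$ (pairs with $x=y$ allowed, so $0\in\Delta(S)$). Logarithms are to any fixed base greater than 1 (the bound is a ratio of logarithms). *)

theory Defs
  imports "HOL-Analysis.Analysis" "HOL-Library.FuncSet"
begin

text \<open>Words of length n over [q] = {0..<q}, as functions on {0..<n} (extensional: value undefined outside).\<close>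
definition words :: "nat \<Rightarrow> nat \<Rightarrow> (nat \<Rightarrow> nat) set" where
  "words q n = PiE {0..<n} (\<lambda>_. {0..<q})"

definition hamming :: "nat \<Rightarrow> (nat \<Rightarrow> nat) \<Rightarrow> (nat \<Rightarrow> nat) \<Rightarrow> nat" where
  "hamming n x y = card {i \<in> {0..<n}. x i \<noteq> y i}"

definition dist_set :: "nat \<Rightarrow> (nat \<Rightarrow> nat) set \<Rightarrow> nat set" where
  "dist_set n S = {hamming n x y | x y. x \<in> S \<and> y \<in> S}"

end

theory Submission
  imports Defs "HOL-Library.Function_Algebras"
begin

text \<open>Polynomial method. For a word x let \<open>f\<^sub>x y = (\<Prod>\<delta>. \<delta> - d(x, y))\<close>, the product over
  the nonzero distances \<open>\<delta>\<close> occurring in S. Then \<open>f\<^sub>x x \<noteq> 0\<close> and \<open>f\<^sub>x y = 0\<close> for all other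
  \<open>y \<in> S\<close>, so the \<open>f\<^sub>x\<close> (\<open>x \<in> S\<close>) are linearly independent. Since \<open>d(x, y)\<close> is n minus a sum of
  coordinate indicators \<open>[y\<^sub>i = a]\<close>, each \<open>f\<^sub>x\<close> lies in the span of the indicators of the
  partial assignments of at most k coordinates, where k is the number of nonzero distances.
  There are at most \<open>(nq + 1)\<^sup>k\<close> of those, whence \<open>|S| \<le> (nq + 1)\<^sup>k \<le> (2nq)\<^bsup>|\<Delta>(S)|\<^esup>\<close>.\<close>

text \<open>Function_Algebras gives functions into \<open>real\<close> only the pointwise ring structure;
  the pointwise scalar multiplication making them a real vector space is supplied here.\<close>

interpretation real_fun: vector_space "\<lambda>c (f :: 'a \<Rightarrow> real) x. c * f x"
  by unfold_locales (auto simp: fun_eq_iff algebra_simps)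

lemma real_fun_sum_apply: "(\<Sum>i\<in>A. f i) x = (\<Sum>i\<in>A. f i x :: real)"
  by (induction A rule: infinite_finite_induct) auto

lemma real_fun_span_times:
  assumes "h \<in> real_fun.span B" and "\<And>b. b \<in> B \<Longrightarrow> b * e \<in> real_fun.span C"
  shows "h * e \<in> real_fun.span C"
  using assms(1)
proof (induction rule: real_fun.span_induct_alt)
  case base
  then show ?case by (metis mult_zero_left real_fun.span_zero)
next
  case (step c b h)
  have "((\<lambda>x. c * b x) + h) * e = (\<lambda>x. c * (b * e) x) + h * e"
    by (simp add: fun_eq_iff algebra_simps)
  with step assms(2) show ?case
    by (metis real_fun.span_add real_fun.span_scale)
qed

lemma card_le_card_if_diagonal_in_span:
  fixes f :: "'a \<Rightarrow> 'a \<Rightarrow> real"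
  assumes "finite B" and "f ` S \<subseteq> real_fun.span B"
    and diag: "\<And>x. x \<in> S \<Longrightarrow> f x x \<noteq> 0"
    and off_diag: "\<And>x y. x \<in> S \<Longrightarrow> y \<in> S \<Longrightarrow> x \<noteq> y \<Longrightarrow> f x y = 0"
  shows "card S \<le> card B"
proof -
  have inj: "inj_on f S"
    by (rule inj_onI) (metis diag off_diag)
  have "real_fun.independent (f ` S)"
    unfolding real_fun.independent_explicit_finite_subsets
  proof (intro allI impI ballI)
    fix T u v
    assume T: "T \<subseteq> f ` S" "finite T" and comb: "(\<Sum>w\<in>T. (\<lambda>x. u w * w x)) = 0" and "v \<in> T"
    then obtain x where x: "x \<in> S" "v = f x" by auto
    have "(\<Sum>w\<in>T - {v}. u w * w x) = 0"
      using T(1) x off_diag by (intro sum.neutral) auto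
    then have "(\<Sum>w\<in>T. u w * w x) = u v * v x"
      using \<open>v \<in> T\<close> T(2) by (simp add: sum.remove)
    moreover have "(\<Sum>w\<in>T. u w * w x) = 0"
      using fun_cong[OF comb, of x] by (simp add: real_fun_sum_apply)
    ultimately show "u v = 0"
      using diag x by simp
  qed
  then have "card (f ` S) \<le> card B"
    using real_fun.independent_span_bound assms(1,2) by blast
  then show ?thesis
    by (simp add: card_image[OF inj])
qed

text \<open>The monomial \<open>\<Prod>(i, a)\<in>P. [y\<^sub>i = a]\<close> of the coordinate indicators, written as a
  single indicator so that multiplying by a further indicator is just insertion into P.\<close>

definition pattern_indicator :: "('i \<times> 'b) set \<Rightarrow> ('i \<Rightarrow> 'b) \<Rightarrow> real" where
  "pattern_indicator P = (\<lambda>y. of_bool (\<forall>(i, a)\<in>P. y i = a))"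

definition pattern_indicators :: "('i \<times> 'b) set \<Rightarrow> nat \<Rightarrow> (('i \<Rightarrow> 'b) \<Rightarrow> real) set" where
  "pattern_indicators A k = pattern_indicator ` {P. P \<subseteq> A \<and> card P \<le> k}"

lemma pattern_indicator_times:
  "pattern_indicator P * (\<lambda>y. of_bool (y i = a)) = pattern_indicator (insert (i, a) P)"
  by (auto simp: pattern_indicator_def fun_eq_iff)

lemma pattern_indicators_mono: "k \<le> k' \<Longrightarrow> pattern_indicators A k \<subseteq> pattern_indicators A k'"
  unfolding pattern_indicators_def by auto

lemma span_pattern_indicators_times:
  assumes "h \<in> real_fun.span (pattern_indicators A k)" and "(i, a) \<in> A"
  shows "h * (\<lambda>y. of_bool (y i = a)) \<in> real_fun.span (pattern_indicators A (Suc k))"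
proof (rule real_fun_span_times[OF assms(1)])
  fix b assume "b \<in> pattern_indicators A k"
  then obtain P where P: "P \<subseteq> A" "card P \<le> k" "b = pattern_indicator P"
    unfolding pattern_indicators_def by auto
  have "card (insert (i, a) P) \<le> Suc k"
    using P(2) by (cases "finite P") (auto simp: card_insert_if)
  with P assms(2) have "b * (\<lambda>y. of_bool (y i = a)) \<in> pattern_indicators A (Suc k)"
    unfolding pattern_indicators_def by (auto simp: pattern_indicator_times)
  then show "b * (\<lambda>y. of_bool (y i = a)) \<in> real_fun.span (pattern_indicators A (Suc k))"
    by (rule real_fun.span_base)
qed

lemma card_subsets_card_le:
  assumes "finite A"
  shows "card {P. P \<subseteq> A \<and> card P \<le> k} \<le> (card A + 1) ^ k"
proof -
  have "{P. P \<subseteq> A \<and> card P \<le> k} = (\<Union>j\<le>k. {P. P \<subseteq> A \<and> card P = j})"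
    by auto
  then have "card {P. P \<subseteq> A \<and> card P \<le> k} \<le> (\<Sum>j\<le>k. card A choose j)"
    using card_UN_le[of "{..k}" "\<lambda>j. {P. P \<subseteq> A \<and> card P = j}"] by (simp add: n_subsets assms)
  also have "\<dots> \<le> (\<Sum>j\<le>k. (k choose j) * card A ^ j)"
  proof (rule sum_mono)
    fix j assume "j \<in> {..k}"
    then have "1 \<le> k choose j"
      by (simp add: Suc_le_eq)
    moreover have "card A choose j \<le> card A ^ j"
      by (cases "j \<le> card A") (simp_all add: binomial_le_pow binomial_eq_0)
    ultimately show "card A choose j \<le> (k choose j) * card A ^ j"
      by (metis dual_order.trans mult_1 mult_le_mono1)
  qed
  also have "\<dots> = (card A + 1) ^ k"
    using binomial_ring[of "card A" 1 k] by (simp add: mult_ac)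
  finally show ?thesis .
qed

lemma card_pattern_indicators:
  assumes "finite A"
  shows "card (pattern_indicators A k) \<le> (card A + 1) ^ k"
proof -
  have "finite {P. P \<subseteq> A \<and> card P \<le> k}"
    using assms by (auto intro: finite_subset[of _ "Pow A"])
  then have "card (pattern_indicators A k) \<le> card {P. P \<subseteq> A \<and> card P \<le> k}"
    unfolding pattern_indicators_def by (rule card_image_le)
  also have "\<dots> \<le> (card A + 1) ^ k"
    using assms by (rule card_subsets_card_le)
  finally show ?thesis .
qed

lemma finite_pattern_indicators: "finite A \<Longrightarrow> finite (pattern_indicators A k)"
  unfolding pattern_indicators_def by simp

lemma finite_words: "finite (words q n)"
  unfolding words_def by (simp add: finite_PiE)

lemma hamming_le: "hamming n x y \<le> n"
  unfolding hamming_def by (rule order.trans[OF card_mono[OF finite_atLeastLessThan Collect_subset]]) simp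

lemma hamming_eq_0_iff:
  assumes "x \<in> words q n" and "y \<in> words q n"
  shows "hamming n x y = 0 \<longleftrightarrow> x = y"
  using assms by (auto simp: hamming_def words_def PiE_iff extensional_def fun_eq_iff) metis

lemma real_hamming: "real (hamming n x y) = real n - (\<Sum>i<n. of_bool (y i = x i))"
proof -
  have "{i \<in> {0..<n}. x i \<noteq> y i} = {..<n} \<inter> {i. x i \<noteq> y i}"
    by auto
  then have "real (hamming n x y) = (\<Sum>i<n. of_bool (x i \<noteq> y i))"
    by (simp add: hamming_def)
  also have "\<dots> = (\<Sum>i<n. 1 - of_bool (y i = x i))"
    by (intro sum.cong) auto
  finally show ?thesis
    by (simp add: sum_subtractf)
qed

lemma distance_polynomial_in_span:
  assumes "finite T" and "x \<in> words q n"
  shows "(\<lambda>y. \<Prod>\<delta>\<in>T. \<delta> - real (hamming n x y))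
    \<in> real_fun.span (pattern_indicators ({0..<n} \<times> {0..<q}) (card T))"
  using assms(1)
proof (induction T rule: finite_induct)
  case empty
  have "(\<lambda>_. 1) \<in> pattern_indicators ({0..<n} \<times> {0..<q}) 0"
    unfolding pattern_indicators_def pattern_indicator_def by force
  then show ?case
    by (simp add: real_fun.span_base)
next
  case (insert t T)
  let ?V = "real_fun.span (pattern_indicators ({0..<n} \<times> {0..<q}) (Suc (card T)))"
  let ?h = "\<lambda>y. \<Prod>\<delta>\<in>T. \<delta> - real (hamming n x y)"
  have "?h \<in> ?V"
    using insert.IH real_fun.span_mono[OF pattern_indicators_mono[of "card T" "Suc (card T)"]] by auto
  moreover have "?h * (\<lambda>y. of_bool (y i = x i)) \<in> ?V" if "i < n" for i
    using span_pattern_indicators_times[OF insert.IH] that assms(2) by (auto simp: words_def PiE_iff)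
  ultimately have "(\<lambda>y. (t - real n) * ?h y) + (\<Sum>i<n. ?h * (\<lambda>y. of_bool (y i = x i))) \<in> ?V"
    by (intro real_fun.span_add real_fun.span_scale real_fun.span_sum) auto
  moreover have "(\<lambda>y. \<Prod>\<delta>\<in>insert t T. \<delta> - real (hamming n x y))
      = (\<lambda>y. (t - real n) * ?h y) + (\<Sum>i<n. ?h * (\<lambda>y. of_bool (y i = x i)))"
    using insert.hyps by (simp add: fun_eq_iff real_hamming real_fun_sum_apply algebra_simps
        sum_distrib_left)
  ultimately show ?case
    using insert.hyps by simp
qed

lemma finite_dist_set: "finite (dist_set n S)"
  unfolding dist_set_def by (rule finite_subset[of _ "{..n}"]) (auto simp: hamming_le)

lemma card_le_pow_card_nonzero_distances:
  assumes "S \<subseteq> words q n"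
  shows "card S \<le> (n * q + 1) ^ card (dist_set n S - {0})"
proof -
  define \<Delta> where "\<Delta> = real ` (dist_set n S - {0})"
  define f where "f x = (\<lambda>y. \<Prod>\<delta>\<in>\<Delta>. \<delta> - real (hamming n x y))" for x
  let ?A = "{0..<n} \<times> {0..<q}"
  have \<Delta>: "finite \<Delta>" "card \<Delta> = card (dist_set n S - {0})"
    unfolding \<Delta>_def by (simp_all add: finite_dist_set card_image)
  have "card S \<le> card (pattern_indicators ?A (card \<Delta>))"
  proof (rule card_le_card_if_diagonal_in_span)
    show "f ` S \<subseteq> real_fun.span (pattern_indicators ?A (card \<Delta>))"
      using distance_polynomial_in_span[OF \<Delta>(1)] assms unfolding f_def by auto
    show "f x x \<noteq> 0" for x
      using \<Delta>(1) by (auto simp: f_def hamming_def \<Delta>_def)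
    show "f x y = 0" if "x \<in> S" "y \<in> S" "x \<noteq> y" for x y
    proof -
      have "real (hamming n x y) \<in> \<Delta>"
        using that assms hamming_eq_0_iff unfolding \<Delta>_def dist_set_def by blast
      then show ?thesis
        using \<Delta>(1) by (auto simp: f_def intro: prod_zero)
    qed
  qed (simp add: finite_pattern_indicators)
  also have "\<dots> \<le> (n * q + 1) ^ card (dist_set n S - {0})"
    using card_pattern_indicators[of ?A] \<Delta>(2) by simp
  finally show ?thesis .
qed

theorem theorem1p2:
  fixes q n :: nat and S :: "(nat \<Rightarrow> nat) set"
  assumes "q \<ge> 2" and "n \<ge> 1"
    and "S \<subseteq> words q n" and "S \<noteq> {}"
  shows "real (card (dist_set n S)) \<ge> ln (real (card S)) / (2 * ln (2 * real n * real q))"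
proof -
  let ?D = "dist_set n S" and ?N = "2 * real n * real q"
  have "finite S"
    using assms(3) finite_words finite_subset by blast
  with assms(4) have "0 < real (card S)"
    by (simp add: card_gt_0_iff)
  have "2 \<le> real n * real q"
    using assms(1,2) mult_mono[of 1 "real n" 2 "real q"] by simp
  then have "0 < ln ?N"
    by simp
  have "real (card S) \<le> real ((n * q + 1) ^ card (?D - {0}))"
    using card_le_pow_card_nonzero_distances[OF assms(3)] of_nat_le_iff by blast
  also have "\<dots> = (real n * real q + 1) ^ card (?D - {0})"
    by (simp add: add.commute)
  also have "\<dots> \<le> (real n * real q + 1) ^ card ?D"
    using card_Diff1_le by (intro power_increasing) auto
  also have "\<dots> \<le> ?N ^ card ?D"
    using \<open>2 \<le> real n * real q\<close> by (intro power_mono) auto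
  finally have "ln (real (card S)) \<le> ln (?N ^ card ?D)"
    using \<open>0 < real (card S)\<close> by simp
  also have "\<dots> = real (card ?D) * ln ?N"
    by (simp add: ln_realpow)
  also have "\<dots> \<le> real (card ?D) * (2 * ln ?N)"
    using \<open>0 < ln ?N\<close> by (intro mult_left_mono) auto
  finally show ?thesis
    using \<open>0 < ln ?N\<close> by (simp add: divide_le_eq)
qed

end
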